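(* Let $v_0\in\mathbb{R}^n$ be a unit vector, $\tau>0$, $\epsilon\ge 0$, and let $\mathbf{A}$ be any $n\times n\times n$ tensor with slices $A_i\in\mathbb{R}^{n\times n}$, $(A_i)_{jk}=\mathbf{A}_{ijk}$. Let $\mathbf{T}=\tau v_0^{\otimes 3}+\mathbf{A}$ with slices $T_i$. Let $w\in\mathbb{R}^{n^2}$ be the vector flattening of $\mathrm{Id}_{n\times n}$ (so $w_{(j,k)}=\delta_{jk}$). Suppose $\|\sum_i A_i\otimes A_i-n\,ww^T\|\le \epsilon\tau^2$ and $\|\sum_i v_0(i)A_i\|\le \epsilon\tau$. Then any top left or right singular vector $v'$ of $M:=\sum_i T_i\otimes T_i-n\,ww^T$ satisfies $\langle v',v_0\otimes v_0\rangle^2\ge 1-O(\epsilon)$.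
   Context: Norms of matrices are operator norms. The Kronecker product $A\otimes B$ is indexed by pairs: $(A\otimes B)[(j,k),(j',k')]=A_{jj'}B_{kk'}$. Note $n\,ww^T=\mathbb{E}\sum_i A_i\otimes A_i$ when $\mathbf{A}$ has i.i.d. standard Gaussian entries. *)

theory Defs
  imports Complex_Main
begin

text \<open>Matrices over a finite index set I are functions I => I => real (entries outside I
are irrelevant); vectors are functions I => real.\<close>

definition mvec :: "'i set \<Rightarrow> ('i \<Rightarrow> 'i \<Rightarrow> real) \<Rightarrow> ('i \<Rightarrow> real) \<Rightarrow> 'i \<Rightarrow> real" where
  "mvec I M x = (\<lambda>i. \<Sum>j\<in>I. M i j * x j)"

definition mtr :: "('i \<Rightarrow> 'i \<Rightarrow> real) \<Rightarrow> 'i \<Rightarrow> 'i \<Rightarrow> real" where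
  "mtr M = (\<lambda>i j. M j i)"

definition unitv :: "'i set \<Rightarrow> ('i \<Rightarrow> real) \<Rightarrow> bool" where
  "unitv I x \<longleftrightarrow> (\<Sum>i\<in>I. (x i)^2) = 1"

definition opnorm :: "'i set \<Rightarrow> ('i \<Rightarrow> 'i \<Rightarrow> real) \<Rightarrow> real" where
  "opnorm I M = Sup ((\<lambda>x. sqrt (\<Sum>i\<in>I. (mvec I M x i)^2)) ` {x. unitv I x})"

definition top_right_sv :: "'i set \<Rightarrow> ('i \<Rightarrow> 'i \<Rightarrow> real) \<Rightarrow> ('i \<Rightarrow> real) \<Rightarrow> bool" where
  "top_right_sv I M v \<longleftrightarrow> unitv I v \<and>
     (\<forall>i\<in>I. mvec I (mtr M) (mvec I M v) i = (opnorm I M)^2 * v i)"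

definition top_left_sv :: "'i set \<Rightarrow> ('i \<Rightarrow> 'i \<Rightarrow> real) \<Rightarrow> ('i \<Rightarrow> real) \<Rightarrow> bool" where
  "top_left_sv I M u \<longleftrightarrow> unitv I u \<and>
     (\<forall>i\<in>I. mvec I M (mvec I (mtr M) u) i = (opnorm I M)^2 * u i)"

text \<open>sum_{i<n} X_i (x) X_i for a tensor X with slices (X_i)_{jk} = X i j k; Kronecker product
  indexed by pairs: (P (x) Q)[(j,k),(j',k')] = P_{jj'} Q_{kk'}.\<close>
definition slice_kron_sum :: "nat \<Rightarrow> (nat \<Rightarrow> nat \<Rightarrow> nat \<Rightarrow> real) \<Rightarrow> nat \<times> nat \<Rightarrow> nat \<times> nat \<Rightarrow> real" where
  "slice_kron_sum n X p q = (\<Sum>i<n. X i (fst p) (fst q) * X i (snd p) (snd q))"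

definition flat_id :: "nat \<times> nat \<Rightarrow> real" where
  "flat_id p = (if fst p = snd p then 1 else 0)"

definition nwwT :: "nat \<Rightarrow> nat \<times> nat \<Rightarrow> nat \<times> nat \<Rightarrow> real" where
  "nwwT n p q = real n * flat_id p * flat_id q"

end

theory Submission
  imports Defs "HOL-Analysis.L2_Norm" "HOL-Analysis.Convex"
begin

text \<open>Write \<open>u = v\<^sub>0 \<otimes> v\<^sub>0\<close>, a unit vector. Expanding the slices of \<open>T\<close> gives
  \<open>M = \<tau>\<^sup>2 u u\<^sup>T + E\<close> with \<open>E = \<tau> (v\<^sub>0v\<^sub>0\<^sup>T \<otimes> B) + \<tau> (B \<otimes> v\<^sub>0v\<^sub>0\<^sup>T) + D\<close>, where
  \<open>B = \<Sum>\<^sub>i v\<^sub>0(i) A\<^sub>i\<close> and \<open>D = \<Sum>\<^sub>i A\<^sub>i \<otimes> A\<^sub>i - n ww\<^sup>T\<close>; the hypotheses give \<open>\<parallel>E\<parallel> \<le> 3\<epsilon>\<tau>\<^sup>2\<close>.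
  Testing \<open>M\<close> on \<open>u\<close> shows \<open>\<sigma>\<^sub>m\<^sub>a\<^sub>x(M) \<ge> \<tau>\<^sup>2 - \<parallel>E\<parallel>\<close>, while for a top singular vector \<open>v'\<close>
  one has \<open>\<sigma>\<^sub>m\<^sub>a\<^sub>x(M) = \<parallel>Mv'\<parallel> \<le> \<tau>\<^sup>2 |\<langle>u,v'\<rangle>| + \<parallel>E\<parallel>\<close>. Hence \<open>|\<langle>u,v'\<rangle>| \<ge> 1 - 6\<epsilon>\<close>,
  and \<open>\<langle>u,v'\<rangle>\<^sup>2 \<ge> 1 - 12\<epsilon>\<close>.\<close>

lemma L2_set_power2: "(L2_set f A)^2 = (\<Sum>i\<in>A. (f i)^2)"
  unfolding L2_set_def by (simp add: sum_nonneg)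

lemma L2_set_le_iff: "L2_set f A \<le> L2_set g B \<longleftrightarrow> (\<Sum>i\<in>A. (f i)^2) \<le> (\<Sum>i\<in>B. (g i)^2)"
  unfolding L2_set_def by simp

lemma L2_set_scale_abs: "L2_set (\<lambda>r. c * f r) A = \<bar>c\<bar> * L2_set f A"
proof -
  have "L2_set (\<lambda>r. c * f r) A = L2_set (\<lambda>r. \<bar>c\<bar> * f r) A"
    unfolding L2_set_def by (simp add: power_mult_distrib)
  then show ?thesis by (simp add: L2_set_right_distrib[symmetric])
qed

lemma sum_mult_le_L2_set: "(\<Sum>i\<in>A. f i * g i) \<le> L2_set f A * L2_set g A"
proof -
  have "(\<Sum>i\<in>A. f i * g i) \<le> (\<Sum>i\<in>A. \<bar>f i\<bar> * \<bar>g i\<bar>)"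
    by (rule sum_mono) (metis abs_ge_self abs_mult)
  also have "\<dots> \<le> L2_set f A * L2_set g A" by (rule L2_set_mult_ineq)
  finally show ?thesis .
qed

lemma unitv_iff_L2_set: "unitv I x \<longleftrightarrow> L2_set x I = 1"
  unfolding unitv_def L2_set_def by simp

lemma unitv_nonempty: "unitv I x \<Longrightarrow> I \<noteq> {}"
  unfolding unitv_def by auto

lemma sum_product_fst_snd:
  "(\<Sum>p\<in>A \<times> B. f (fst p) * g (snd p)) = sum f A * (sum g B :: 'c::comm_semiring_1)"
  by (simp add: sum_product sum.cartesian_product case_prod_beta)

lemma unitv_tensor_square:
  assumes "unitv I v"
  shows "unitv (I \<times> I) (\<lambda>p. v (fst p) * v (snd p))"
proof -
  have "(\<Sum>p\<in>I \<times> I. (v (fst p) * v (snd p))^2) = (\<Sum>j\<in>I. (v j)^2) * (\<Sum>k\<in>I. (v k)^2)"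
    unfolding power_mult_distrib by (rule sum_product_fst_snd)
  then show ?thesis using assms by (simp add: unitv_def)
qed

lemma opnorm_eq_Sup_L2_set: "opnorm I M = Sup ((\<lambda>x. L2_set (mvec I M x) I) ` {x. unitv I x})"
  unfolding opnorm_def L2_set_def by simp

lemma L2_set_mvec_le_sum_abs:
  assumes "finite I" "unitv I x"
  shows "L2_set (mvec I M x) I \<le> (\<Sum>i\<in>I. \<Sum>j\<in>I. \<bar>M i j\<bar>)"
proof -
  have x_le_1: "\<bar>x j\<bar> \<le> 1" if "j \<in> I" for j
    using member_le_L2_set[OF assms(1) that, of "\<lambda>j. \<bar>x j\<bar>"] assms(2)
    by (simp add: unitv_iff_L2_set L2_set_def)
  have "L2_set (mvec I M x) I \<le> (\<Sum>i\<in>I. \<bar>mvec I M x i\<bar>)" by (rule L2_set_le_sum_abs)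
  also have "\<dots> \<le> (\<Sum>i\<in>I. \<Sum>j\<in>I. \<bar>M i j\<bar>)"
    unfolding mvec_def
    by (intro sum_mono order_trans[OF sum_abs])
       (simp add: abs_mult mult_left_le x_le_1)
  finally show ?thesis .
qed

lemma L2_set_mvec_le_opnorm:
  assumes "finite I" "unitv I x"
  shows "L2_set (mvec I M x) I \<le> opnorm I M"
  unfolding opnorm_eq_Sup_L2_set
proof (rule cSup_upper)
  show "L2_set (mvec I M x) I \<in> (\<lambda>x. L2_set (mvec I M x) I) ` {x. unitv I x}"
    using assms by auto
  show "bdd_above ((\<lambda>x. L2_set (mvec I M x) I) ` {x. unitv I x})"
    using L2_set_mvec_le_sum_abs[OF assms(1)] by (auto intro!: bdd_aboveI2)
qed

lemma opnorm_nonneg: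
  assumes "finite I" "I \<noteq> {}"
  shows "0 \<le> opnorm I M"
proof -
  obtain i0 where "i0 \<in> I" using assms by auto
  moreover have "(\<Sum>i\<in>I. (if i = i0 then 1 else 0::real)^2) = (\<Sum>i\<in>I. if i = i0 then 1 else 0)"
    by (rule sum.cong) auto
  ultimately have "unitv I (\<lambda>j. if j = i0 then 1 else 0)"
    using assms(1) by (simp add: unitv_def)
  from L2_set_mvec_le_opnorm[OF assms(1) this] show ?thesis
    by (meson L2_set_nonneg order_trans)
qed

lemma mvec_scale_vector: "mvec I M (\<lambda>j. c * x j) = (\<lambda>i. c * mvec I M x i)"
  unfolding mvec_def by (auto simp: sum_distrib_left algebra_simps)

lemma L2_set_mvec_le_opnorm_mult:
  assumes "finite I"
  shows "L2_set (mvec I M x) I \<le> opnorm I M * L2_set x I"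
proof (cases "L2_set x I = 0")
  case True
  then have "mvec I M x i = 0" if "i \<in> I" for i
    using L2_set_eq_0_iff[OF assms] by (simp add: mvec_def)
  then show ?thesis using True by (simp add: L2_set_0')
next
  case False
  define r where "r = L2_set x I"
  have r: "r > 0" using False r_def L2_set_nonneg[of x I] by linarith
  have "L2_set (\<lambda>j. (1/r) * x j) I = 1"
    by (subst L2_set_right_distrib[symmetric]) (use r in \<open>auto simp: r_def\<close>)
  then have "unitv I (\<lambda>j. (1/r) * x j)"
    by (simp only: unitv_iff_L2_set)
  then have "L2_set (mvec I M (\<lambda>j. (1/r) * x j)) I \<le> opnorm I M"
    by (rule L2_set_mvec_le_opnorm[OF assms])
  moreover have "0 \<le> 1/r" using r by simp
  ultimately have "(1/r) * L2_set (mvec I M x) I \<le> opnorm I M"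
    by (simp only: mvec_scale_vector L2_set_right_distrib[symmetric])
  then show ?thesis using r by (simp add: field_simps r_def)
qed

lemma sum_mult_mvec_mtr:
  assumes "finite I"
  shows "(\<Sum>j\<in>I. y j * mvec I (mtr E) x j) = (\<Sum>i\<in>I. x i * mvec I E y i)"
proof -
  have "(\<Sum>j\<in>I. y j * mvec I (mtr E) x j) = (\<Sum>j\<in>I. \<Sum>i\<in>I. x i * E i j * y j)"
    unfolding mvec_def mtr_def by (simp add: sum_distrib_left mult_ac)
  also have "\<dots> = (\<Sum>i\<in>I. \<Sum>j\<in>I. x i * E i j * y j)" by (rule sum.swap)
  also have "\<dots> = (\<Sum>i\<in>I. x i * mvec I E y i)"
    unfolding mvec_def by (simp add: sum_distrib_left mult_ac)
  finally show ?thesis .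
qed

lemma L2_set_mvec_mtr_le:
  assumes "finite I" "b \<ge> 0" "\<And>z. L2_set (mvec I E z) I \<le> b * L2_set z I"
  shows "L2_set (mvec I (mtr E) x) I \<le> b * L2_set x I"
proof -
  define y where "y = mvec I (mtr E) x"
  have "(L2_set y I)^2 = (\<Sum>j\<in>I. y j * y j)"
    unfolding L2_set_power2 by (simp add: power2_eq_square)
  also have "\<dots> = (\<Sum>i\<in>I. x i * mvec I E y i)"
    using sum_mult_mvec_mtr[OF assms(1), of y E x] by (simp add: y_def)
  also have "\<dots> \<le> L2_set x I * L2_set (mvec I E y) I" by (rule sum_mult_le_L2_set)
  also have "\<dots> \<le> (b * L2_set x I) * L2_set y I"
    using mult_left_mono[OF assms(3)[of y] L2_set_nonneg] by (simp add: mult_ac)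
  finally have "(L2_set y I)^2 \<le> (b * L2_set x I) * L2_set y I" .
  then show ?thesis
    using assms(2) L2_set_nonneg[of y I] unfolding y_def[symmetric]
    by (cases "L2_set y I = 0") (simp_all add: power2_eq_square)
qed

lemma L2_set_mvec_eigenvector:
  assumes "finite I" "unitv I v" "\<forall>i\<in>I. mvec I (mtr M) (mvec I M v) i = s^2 * v i"
  shows "L2_set (mvec I M v) I = \<bar>s\<bar>"
proof -
  have "(L2_set (mvec I M v) I)^2 = (\<Sum>j\<in>I. mvec I M v j * mvec I M v j)"
    unfolding L2_set_power2 by (simp add: power2_eq_square)
  also have "\<dots> = (\<Sum>i\<in>I. v i * mvec I (mtr M) (mvec I M v) i)"
    using sum_mult_mvec_mtr[OF assms(1), of "mvec I M v" "mtr M" v] by (simp add: mtr_def)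
  also have "\<dots> = s^2 * (\<Sum>i\<in>I. (v i)^2)"
    by (simp add: assms(3) sum_distrib_left power2_eq_square mult_ac)
  also have "\<dots> = \<bar>s\<bar>^2" using assms(2) by (simp add: unitv_def)
  finally show ?thesis
    by (metis L2_set_nonneg abs_of_nonneg power2_eq_iff_nonneg abs_ge_zero power_abs)
qed

lemma mvec_rank_one_plus:
  "mvec J (\<lambda>p q. t * u p * u q + F p q) x = (\<lambda>p. t * (\<Sum>q\<in>J. u q * x q) * u p + mvec J F x p)"
  unfolding mvec_def by (rule ext) (simp add: distrib_left sum.distrib sum_distrib_left mult_ac)

lemma L2_set_mvec_rank_one_plus_le:
  assumes "finite J" "unitv J u" "unitv J x" "\<And>z. L2_set (mvec J F z) J \<le> e * L2_set z J"
  shows "L2_set (mvec J (\<lambda>p q. t * u p * u q + F p q) x) J \<le> \<bar>t\<bar> * \<bar>\<Sum>q\<in>J. u q * x q\<bar> + e"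
proof -
  have "L2_set (mvec J (\<lambda>p q. t * u p * u q + F p q) x) J
      \<le> L2_set (\<lambda>p. t * (\<Sum>q\<in>J. u q * x q) * u p) J + L2_set (mvec J F x) J"
    unfolding mvec_rank_one_plus by (rule L2_set_triangle_ineq)
  also have "\<dots> \<le> \<bar>t\<bar> * \<bar>\<Sum>q\<in>J. u q * x q\<bar> + e"
    using assms(2,3) assms(4)[of x] by (simp add: L2_set_scale_abs abs_mult unitv_iff_L2_set)
  finally show ?thesis .
qed

lemma L2_set_mvec_rank_one_plus_ge:
  assumes "finite J" "unitv J u" "t \<ge> 0" "\<And>z. L2_set (mvec J F z) J \<le> e * L2_set z J"
  shows "t - e \<le> L2_set (mvec J (\<lambda>p q. t * u p * u q + F p q) u) J"
proof -
  have "(\<Sum>q\<in>J. u q * u q) = 1" using assms(2) by (simp add: unitv_def power2_eq_square)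
  then have split: "(\<lambda>p. t * u p) = (\<lambda>p. mvec J (\<lambda>p q. t * u p * u q + F p q) u p + - mvec J F u p)"
    unfolding mvec_rank_one_plus by simp
  have "t = L2_set (\<lambda>p. t * u p) J"
    using assms(2,3) by (simp add: L2_set_right_distrib[symmetric] unitv_iff_L2_set)
  also have "\<dots> \<le> L2_set (mvec J (\<lambda>p q. t * u p * u q + F p q) u) J + L2_set (\<lambda>p. - mvec J F u p) J"
    unfolding split by (rule L2_set_triangle_ineq)
  also have "L2_set (\<lambda>p. - mvec J F u p) J \<le> e"
    using assms(2) assms(4)[of u] by (simp add: L2_set_def unitv_iff_L2_set)
  finally show ?thesis by simp
qed

lemma top_sv_rank_one_plus_alignment:
  assumes J: "finite J" and u: "unitv J u" and t: "t \<ge> 0" and e: "e \<ge> 0"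
    and E: "\<And>z. L2_set (mvec J E z) J \<le> e * L2_set z J"
    and sv: "top_left_sv J (\<lambda>p q. t * u p * u q + E p q) v
           \<or> top_right_sv J (\<lambda>p q. t * u p * u q + E p q) v"
  shows "t - 2 * e \<le> t * \<bar>\<Sum>q\<in>J. u q * v q\<bar>"
proof -
  define M where "M = (\<lambda>p q. t * u p * u q + E p q)"
  define \<sigma> where "\<sigma> = opnorm J M"
  have "t - e \<le> L2_set (mvec J M u) J"
    unfolding M_def by (rule L2_set_mvec_rank_one_plus_ge[OF J u t E])
  also have "\<dots> \<le> \<sigma>" unfolding \<sigma>_def by (rule L2_set_mvec_le_opnorm[OF J u])
  finally have lower: "t - e \<le> \<sigma>" .
  have "\<sigma> \<le> t * \<bar>\<Sum>q\<in>J. u q * v q\<bar> + e"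
    using sv[folded M_def]
  proof
    assume "top_right_sv J M v"
    then have v: "unitv J v" and "\<forall>i\<in>J. mvec J (mtr M) (mvec J M v) i = \<sigma>^2 * v i"
      unfolding top_right_sv_def \<sigma>_def by auto
    then have "\<sigma> \<le> L2_set (mvec J M v) J"
      using L2_set_mvec_eigenvector[OF J] by fastforce
    also have "\<dots> \<le> t * \<bar>\<Sum>q\<in>J. u q * v q\<bar> + e"
      using L2_set_mvec_rank_one_plus_le[OF J u v E, of t] t unfolding M_def by simp
    finally show ?thesis .
  next
    assume "top_left_sv J M v"
    then have v: "unitv J v" and "\<forall>i\<in>J. mvec J (mtr (mtr M)) (mvec J (mtr M) v) i = \<sigma>^2 * v i"
      unfolding top_left_sv_def \<sigma>_def by (auto simp: mtr_def)
    then have "\<sigma> \<le> L2_set (mvec J (mtr M) v) J"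
      using L2_set_mvec_eigenvector[OF J] by fastforce
    also have "\<dots> \<le> t * \<bar>\<Sum>q\<in>J. u q * v q\<bar> + e"
    proof -
      have "mtr M = (\<lambda>p q. t * u p * u q + mtr E p q)"
        unfolding M_def mtr_def by (simp add: mult_ac)
      then show ?thesis
        using L2_set_mvec_rank_one_plus_le[OF J u v L2_set_mvec_mtr_le[OF J e E], of t] t by simp
    qed
    finally show ?thesis .
  qed
  with lower show ?thesis by linarith
qed

lemma sum_product_swap: "(\<Sum>p\<in>A \<times> A. g (prod.swap p)) = (\<Sum>p\<in>A \<times> A. g p)"
  using sum.reindex[of prod.swap "A \<times> A" g] by (simp add: product_swap comp_def)

lemma L2_set_product_swap: "L2_set (\<lambda>p. f (prod.swap p)) (A \<times> A) = L2_set f (A \<times> A)"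
  unfolding L2_set_def using sum_product_swap[of "\<lambda>p. (f p)^2"] by simp

lemma L2_set_mvec_kron_left_le:
  assumes I: "finite I" and v: "unitv I v"
  shows "L2_set (mvec (I \<times> I) (\<lambda>p q. v (fst p) * v (fst q) * B (snd p) (snd q)) x) (I \<times> I)
          \<le> opnorm I B * L2_set x (I \<times> I)"
proof -
  define y where "y = (\<lambda>k. \<Sum>j\<in>I. v j * x (j, k))"
  have vv: "(\<Sum>j\<in>I. (v j)^2) = 1" using v by (simp add: unitv_def)
  have mvec_eq: "mvec (I \<times> I) (\<lambda>p q. v (fst p) * v (fst q) * B (snd p) (snd q)) x p
      = v (fst p) * mvec I B y (snd p)" for p
  proof -
    have "mvec (I \<times> I) (\<lambda>p q. v (fst p) * v (fst q) * B (snd p) (snd q)) x p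
        = (\<Sum>j\<in>I. \<Sum>k\<in>I. v (fst p) * v j * B (snd p) k * x (j, k))"
      unfolding mvec_def by (simp add: sum.cartesian_product case_prod_beta)
    also have "\<dots> = (\<Sum>k\<in>I. \<Sum>j\<in>I. v (fst p) * v j * B (snd p) k * x (j, k))"
      by (rule sum.swap)
    also have "\<dots> = v (fst p) * mvec I B y (snd p)"
      unfolding mvec_def y_def by (simp add: sum_distrib_left mult_ac)
    finally show ?thesis .
  qed
  have "L2_set (mvec (I \<times> I) (\<lambda>p q. v (fst p) * v (fst q) * B (snd p) (snd q)) x) (I \<times> I)
      = L2_set (mvec I B y) I"
    unfolding L2_set_def mvec_eq power_mult_distrib
    using sum_product_fst_snd[where f = "\<lambda>j. (v j)^2" and g = "\<lambda>k. (mvec I B y k)^2"] vv by simp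
  also have "\<dots> \<le> opnorm I B * L2_set y I" by (rule L2_set_mvec_le_opnorm_mult[OF I])
  also have "L2_set y I \<le> L2_set x (I \<times> I)"
  proof -
    have "(\<Sum>k\<in>I. (y k)^2) \<le> (\<Sum>k\<in>I. (\<Sum>j\<in>I. (v j)^2) * (\<Sum>j\<in>I. (x (j, k))^2))"
      unfolding y_def by (rule sum_mono) (rule Cauchy_Schwarz_ineq_sum)
    also have "\<dots> = (\<Sum>k\<in>I. \<Sum>j\<in>I. (x (j, k))^2)" by (simp add: vv)
    also have "\<dots> = (\<Sum>p\<in>I \<times> I. (x p)^2)"
      unfolding sum.cartesian_product' by (rule sum.swap)
    finally show ?thesis unfolding L2_set_le_iff .
  qed
  finally show ?thesis
    using opnorm_nonneg[OF I unitv_nonempty[OF v]] by (simp add: mult_left_mono)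
qed

lemma L2_set_mvec_kron_right_le:
  assumes I: "finite I" and v: "unitv I v"
  shows "L2_set (mvec (I \<times> I) (\<lambda>p q. B (fst p) (fst q) * v (snd p) * v (snd q)) x) (I \<times> I)
          \<le> opnorm I B * L2_set x (I \<times> I)"
proof -
  let ?K = "\<lambda>p q. v (fst p) * v (fst q) * B (snd p) (snd q)"
  have "mvec (I \<times> I) (\<lambda>p q. B (fst p) (fst q) * v (snd p) * v (snd q)) x
      = (\<lambda>p. mvec (I \<times> I) ?K (\<lambda>q. x (prod.swap q)) (prod.swap p))"
  proof
    fix p
    show "mvec (I \<times> I) (\<lambda>p q. B (fst p) (fst q) * v (snd p) * v (snd q)) x p
        = mvec (I \<times> I) ?K (\<lambda>q. x (prod.swap q)) (prod.swap p)"
      unfolding mvec_def by (subst sum_product_swap[symmetric]) (simp add: mult_ac)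
  qed
  then have "L2_set (mvec (I \<times> I) (\<lambda>p q. B (fst p) (fst q) * v (snd p) * v (snd q)) x) (I \<times> I)
      = L2_set (mvec (I \<times> I) ?K (\<lambda>q. x (prod.swap q))) (I \<times> I)"
    by (simp only: L2_set_product_swap)
  also have "\<dots> \<le> opnorm I B * L2_set (\<lambda>q. x (prod.swap q)) (I \<times> I)"
    by (rule L2_set_mvec_kron_left_le[OF I v])
  finally show ?thesis by (simp only: L2_set_product_swap)
qed

lemma mvec_add: "mvec I (\<lambda>p q. F p q + G p q) x = (\<lambda>p. mvec I F x p + mvec I G x p)"
  unfolding mvec_def by (simp add: distrib_right sum.distrib)

lemma mvec_scale_matrix: "mvec I (\<lambda>p q. c * F p q) x = (\<lambda>p. c * mvec I F x p)"
  unfolding mvec_def by (simp add: sum_distrib_left mult_ac)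

lemma L2_set_mvec_kron_cross_plus_le:
  assumes I: "finite I" and v: "unitv I v" and t: "t \<ge> 0"
    and B: "opnorm I B \<le> b" and D: "opnorm (I \<times> I) D \<le> d"
  shows "L2_set (mvec (I \<times> I) (\<lambda>p q. t * (v (fst p) * v (fst q) * B (snd p) (snd q))
           + t * (B (fst p) (fst q) * v (snd p) * v (snd q)) + D p q) z) (I \<times> I)
         \<le> (2 * t * b + d) * L2_set z (I \<times> I)"
proof -
  let ?J = "I \<times> I"
  let ?K1 = "\<lambda>p q. v (fst p) * v (fst q) * B (snd p) (snd q)"
  let ?K2 = "\<lambda>p q. B (fst p) (fst q) * v (snd p) * v (snd q)"
  have z: "L2_set z ?J \<ge> 0" by simp
  have "L2_set (mvec ?J (\<lambda>p q. t * ?K1 p q + t * ?K2 p q + D p q) z) ?J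
      \<le> L2_set (\<lambda>r. t * mvec ?J ?K1 z r) ?J + L2_set (\<lambda>r. t * mvec ?J ?K2 z r) ?J
        + L2_set (mvec ?J D z) ?J"
    unfolding mvec_add mvec_scale_matrix
    by (rule order_trans[OF L2_set_triangle_ineq add_right_mono[OF L2_set_triangle_ineq]])
  also have "\<dots> \<le> t * (b * L2_set z ?J) + t * (b * L2_set z ?J) + d * L2_set z ?J"
  proof (intro add_mono)
    show "L2_set (\<lambda>r. t * mvec ?J ?K1 z r) ?J \<le> t * (b * L2_set z ?J)"
      unfolding L2_set_right_distrib[OF t, symmetric]
      using L2_set_mvec_kron_left_le[OF I v, of B z] mult_right_mono[OF B z] t
      by (meson mult_left_mono order_trans)
    show "L2_set (\<lambda>r. t * mvec ?J ?K2 z r) ?J \<le> t * (b * L2_set z ?J)"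
      unfolding L2_set_right_distrib[OF t, symmetric]
      using L2_set_mvec_kron_right_le[OF I v, of B z] mult_right_mono[OF B z] t
      by (meson mult_left_mono order_trans)
    show "L2_set (mvec ?J D z) ?J \<le> d * L2_set z ?J"
      using L2_set_mvec_le_opnorm_mult[of ?J D z] mult_right_mono[OF D z] I by simp
  qed
  finally show ?thesis by (simp add: algebra_simps)
qed

lemma slice_kron_sum_spiked_decomp:
  assumes v0: "unitv {..<n} v0"
  shows "(\<lambda>p q. slice_kron_sum n (\<lambda>i j k. \<tau> * v0 i * v0 j * v0 k + A i j k) p q - nwwT n p q)
    = (\<lambda>p q. \<tau>^2 * (v0 (fst p) * v0 (snd p)) * (v0 (fst q) * v0 (snd q))
      + (\<tau> * (v0 (fst p) * v0 (fst q) * (\<Sum>i\<in>{..<n}. v0 i * A i (snd p) (snd q)))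
       + \<tau> * ((\<Sum>i\<in>{..<n}. v0 i * A i (fst p) (fst q)) * v0 (snd p) * v0 (snd q))
       + (slice_kron_sum n A p q - nwwT n p q)))"
proof (intro ext)
  fix p q :: "nat \<times> nat"
  obtain a b a' b' where pq: "p = (a, b)" "q = (a', b')" by (cases p, cases q)
  have vv: "(\<Sum>i<n. (v0 i)^2) = 1" using v0 by (simp add: unitv_def)
  have "slice_kron_sum n (\<lambda>i j k. \<tau> * v0 i * v0 j * v0 k + A i j k) p q
     = (\<Sum>i<n. \<tau>^2 * (v0 a * v0 b) * (v0 a' * v0 b') * (v0 i)^2
          + \<tau> * (v0 a * v0 a') * (v0 i * A i b b')
          + \<tau> * (v0 b * v0 b') * (v0 i * A i a a') + A i a a' * A i b b')"
    unfolding slice_kron_sum_def pq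
    by (rule sum.cong) (simp_all add: algebra_simps power2_eq_square)
  also have "\<dots> = \<tau>^2 * (v0 a * v0 b) * (v0 a' * v0 b') * (\<Sum>i<n. (v0 i)^2)
       + \<tau> * (v0 a * v0 a') * (\<Sum>i<n. v0 i * A i b b')
       + \<tau> * (v0 b * v0 b') * (\<Sum>i<n. v0 i * A i a a') + (\<Sum>i<n. A i a a' * A i b b')"
    by (simp add: sum.distrib sum_distrib_left)
  finally show "slice_kron_sum n (\<lambda>i j k. \<tau> * v0 i * v0 j * v0 k + A i j k) p q - nwwT n p q
    = \<tau>^2 * (v0 (fst p) * v0 (snd p)) * (v0 (fst q) * v0 (snd q))
      + (\<tau> * (v0 (fst p) * v0 (fst q) * (\<Sum>i\<in>{..<n}. v0 i * A i (snd p) (snd q)))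
       + \<tau> * ((\<Sum>i\<in>{..<n}. v0 i * A i (fst p) (fst q)) * v0 (snd p) * v0 (snd q))
       + (slice_kron_sum n A p q - nwwT n p q))"
    unfolding vv slice_kron_sum_def pq by (simp add: algebra_simps)
qed

lemma power2_ge_of_abs_ge_one_minus:
  fixes c a :: real
  assumes "1 - a \<le> \<bar>c\<bar>"
  shows "1 - 2 * a \<le> c^2"
proof (cases "1 - a \<ge> 0")
  case True
  have "1 - 2 * a \<le> (1 - a)^2" by (simp add: power2_eq_square algebra_simps)
  also have "\<dots> \<le> \<bar>c\<bar>^2" by (rule power_mono[OF assms True])
  finally show ?thesis by simp
next
  case False
  then show ?thesis by (smt (verit) zero_le_power2)
qed

lemma spiked_tensor_top_sv_alignment:
  fixes v0 :: "nat \<Rightarrow> real" and A :: "nat \<Rightarrow> nat \<Rightarrow> nat \<Rightarrow> real"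
  assumes v0: "unitv {..<n} v0" and \<tau>: "\<tau> > 0" and \<epsilon>: "\<epsilon> \<ge> 0"
    and D: "opnorm ({..<n} \<times> {..<n}) (\<lambda>p q. slice_kron_sum n A p q - nwwT n p q) \<le> \<epsilon> * \<tau>^2"
    and B: "opnorm {..<n} (\<lambda>j k. \<Sum>i\<in>{..<n}. v0 i * A i j k) \<le> \<epsilon> * \<tau>"
    and sv: "top_left_sv ({..<n} \<times> {..<n})
        (\<lambda>p q. slice_kron_sum n (\<lambda>i j k. \<tau> * v0 i * v0 j * v0 k + A i j k) p q - nwwT n p q) v'
      \<or> top_right_sv ({..<n} \<times> {..<n})
        (\<lambda>p q. slice_kron_sum n (\<lambda>i j k. \<tau> * v0 i * v0 j * v0 k + A i j k) p q - nwwT n p q) v'"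
  shows "1 - 6 * \<epsilon> \<le> \<bar>\<Sum>p\<in>{..<n} \<times> {..<n}. v' p * (v0 (fst p) * v0 (snd p))\<bar>"
proof -
  let ?J = "{..<n} \<times> {..<n}"
  have E: "L2_set (mvec ?J (\<lambda>p q.
        \<tau> * (v0 (fst p) * v0 (fst q) * (\<Sum>i\<in>{..<n}. v0 i * A i (snd p) (snd q)))
      + \<tau> * ((\<Sum>i\<in>{..<n}. v0 i * A i (fst p) (fst q)) * v0 (snd p) * v0 (snd q))
      + (slice_kron_sum n A p q - nwwT n p q)) z) ?J
    \<le> (2 * \<tau> * (\<epsilon> * \<tau>) + \<epsilon> * \<tau>^2) * L2_set z ?J" for z
    using L2_set_mvec_kron_cross_plus_le[OF _ v0 _ B D] \<tau> by simp
  have "\<tau>^2 - 2 * (2 * \<tau> * (\<epsilon> * \<tau>) + \<epsilon> * \<tau>^2)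
      \<le> \<tau>^2 * \<bar>\<Sum>q\<in>?J. v0 (fst q) * v0 (snd q) * v' q\<bar>"
    using sv[unfolded slice_kron_sum_spiked_decomp[OF v0]] \<tau> \<epsilon>
    by (intro top_sv_rank_one_plus_alignment[OF _ unitv_tensor_square[OF v0] _ _ E]) simp_all
  then have "\<tau>^2 * (1 - 6 * \<epsilon>) \<le> \<tau>^2 * \<bar>\<Sum>p\<in>?J. v' p * (v0 (fst p) * v0 (snd p))\<bar>"
    by (simp add: algebra_simps power2_eq_square)
  then show ?thesis using \<tau> by simp
qed

theorem mainTheorem5:
  shows "\<exists>C::real. \<forall>(n::nat) (v0::nat \<Rightarrow> real) (\<tau>::real) (\<epsilon>::real)
            (A::nat \<Rightarrow> nat \<Rightarrow> nat \<Rightarrow> real) (v'::nat \<times> nat \<Rightarrow> real).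
     let I = {..<n}; J = I \<times> I;
         T = (\<lambda>i j k. \<tau> * v0 i * v0 j * v0 k + A i j k);
         M = (\<lambda>p q. slice_kron_sum n T p q - nwwT n p q)
     in unitv I v0 \<longrightarrow> \<tau> > 0 \<longrightarrow> \<epsilon> \<ge> 0 \<longrightarrow>
        opnorm J (\<lambda>p q. slice_kron_sum n A p q - nwwT n p q) \<le> \<epsilon> * \<tau>^2 \<longrightarrow>
        opnorm I (\<lambda>j k. \<Sum>i\<in>I. v0 i * A i j k) \<le> \<epsilon> * \<tau> \<longrightarrow>
        (top_left_sv J M v' \<or> top_right_sv J M v') \<longrightarrow>
        (\<Sum>p\<in>J. v' p * (v0 (fst p) * v0 (snd p)))^2 \<ge> 1 - C * \<epsilon>"
  unfolding Let_def
  using power2_ge_of_abs_ge_one_minus[OF spiked_tensor_top_sv_alignment]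
  by (intro exI[of _ 12] allI impI) simp

end
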